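(* For any function $\varphi:\mathbb{Z}_{\ge 0}\to\mathbb{R}$ that is concave and nondecreasing with $\varphi(0)=0$, the Poisson concavity ratio satisfies $\alpha_\varphi\ge 1-\frac{1}{e}$.
   Context: A function $\varphi:\mathbb{Z}_{\ge0}\to\mathbb{R}$ is concave if $\varphi(x+1)-\varphi(x)$ is nonincreasing in $x$. The Poisson concavity ratio is $\alpha_\varphi=\inf_{x\in\mathbb{Z}_{\ge1}}\alpha_\varphi(x)$ where $\alpha_\varphi(x)=\frac{\mathbb{E}_{X\sim\mathrm{Pois}(x)}[\varphi(X)]}{\varphi(x)}$ (defined when $\varphi(x)>0$ for positive integers $x$). *)

theory Defs
  imports "HOL-Probability.Probability"
begin

definition concave_nat :: "(nat \<Rightarrow> real) \<Rightarrow> bool" where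
  "concave_nat \<phi> \<longleftrightarrow> (\<forall>x. \<phi> (Suc (Suc x)) - \<phi> (Suc x) \<le> \<phi> (Suc x) - \<phi> x)"

definition poisson_ratio :: "(nat \<Rightarrow> real) \<Rightarrow> nat \<Rightarrow> real" where
  "poisson_ratio \<phi> x = measure_pmf.expectation (poisson_pmf (real x)) \<phi> / \<phi> x"

definition poisson_concavity_ratio :: "(nat \<Rightarrow> real) \<Rightarrow> real" where
  "poisson_concavity_ratio \<phi> = (INF x\<in>{1..}. poisson_ratio \<phi> x)"

end

theory Submission
  imports Defs
begin

text \<open>
  Concavity with \<open>\<phi> 0 = 0\<close> and monotonicity give \<open>\<phi> k \<ge> \<phi> n / n * min k n\<close>, so for
  \<open>X \<sim> Pois(n)\<close> it suffices to bound \<open>E[min X n]\<close> from below. Its shortfall \<open>E[(n - X)\<^sup>+]\<close>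
  telescopes to \<open>n * n^n / n! * exp (-n)\<close>, and \<open>n^n / n! \<le> exp (n - 1)\<close>, which follows from
  \<open>(1 + 1/n)^n \<le> e\<close>, makes it at most \<open>n / e\<close>.
\<close>

lemma concave_nat_diff_antimono:
  assumes "concave_nat \<phi>" "j \<le> k"
  shows "\<phi> (Suc k) - \<phi> k \<le> \<phi> (Suc j) - \<phi> j"
  using assms(2)
proof (induction k rule: dec_induct)
  case (step k)
  have "\<phi> (Suc (Suc k)) - \<phi> (Suc k) \<le> \<phi> (Suc k) - \<phi> k"
    using assms(1) unfolding concave_nat_def by blast
  with step.IH show ?case by linarith
qed simp

lemma concave_nat_mult_Suc_le:
  assumes "concave_nat \<phi>" "\<phi> 0 = 0"
  shows "real k * \<phi> (Suc k) \<le> real (Suc k) * \<phi> k"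
proof -
  have "real k * (\<phi> (Suc k) - \<phi> k) = (\<Sum>j<k. \<phi> (Suc k) - \<phi> k)"
    by simp
  also have "\<dots> \<le> (\<Sum>j<k. \<phi> (Suc j) - \<phi> j)"
    by (intro sum_mono concave_nat_diff_antimono[OF assms(1)]) simp
  also have "\<dots> = \<phi> k"
    using sum_lessThan_telescope[of \<phi> k] assms(2) by simp
  finally show ?thesis by (simp add: algebra_simps)
qed

lemma concave_nat_chord:
  assumes "concave_nat \<phi>" "\<phi> 0 = 0" "k \<le> n"
  shows "real k * \<phi> n \<le> real n * \<phi> k"
  using assms(3)
proof (induction n rule: dec_induct)
  case (step n)
  show ?case
  proof (cases "n = 0")
    case True
    with step show ?thesis using assms(2) by simp
  next
    case False
    have "real n * (real k * \<phi> (Suc n)) = real k * (real n * \<phi> (Suc n))" by simp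
    also have "\<dots> \<le> real k * (real (Suc n) * \<phi> n)"
      using concave_nat_mult_Suc_le[OF assms(1,2)] by (intro mult_left_mono) auto
    also have "\<dots> \<le> real (Suc n) * (real n * \<phi> k)"
      using mult_left_mono[OF step.IH, of "real (Suc n)"] by (simp add: algebra_simps)
    also have "\<dots> = real n * (real (Suc n) * \<phi> k)" by simp
    finally show ?thesis using False by (simp add: mult_le_cancel_left_pos)
  qed
qed simp

lemma concave_nat_le_linear:
  assumes "concave_nat \<phi>" "\<phi> 0 = 0"
  shows "\<phi> k \<le> \<phi> 1 * real k"
  using concave_nat_chord[OF assms, of 1 k] assms(2) by (cases "k = 0") (auto simp: mult.commute)

lemma concave_nat_min_le:
  assumes "concave_nat \<phi>" "mono \<phi>" "\<phi> 0 = 0"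
  shows "\<phi> n * min (real k) (real n) \<le> real n * \<phi> k"
proof (cases "k \<le> n")
  case True
  then show ?thesis using concave_nat_chord[OF assms(1,3) True] by (simp add: mult.commute)
next
  case False
  then have "\<phi> n \<le> \<phi> k" using assms(2) by (simp add: monoD)
  with False show ?thesis by (simp add: mult.commute mult_left_mono)
qed

lemma one_plus_divide_power_le_exp:
  fixes x :: real
  assumes "0 \<le> x"
  shows "(1 + x / real n) ^ n \<le> exp x"
proof (cases "n = 0")
  case False
  have "(1 + x / real n) ^ n \<le> exp (x / real n) ^ n"
    using assms by (intro power_mono) (auto simp: add.commute exp_ge_add_one_self)
  also have "\<dots> = exp x"
    using False by (simp flip: exp_of_nat_mult)
  finally show ?thesis .
qed (use assms in simp)

lemma power_self_le_fact_mult_exp: "real (Suc m) ^ Suc m \<le> fact (Suc m) * exp (real m)"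
proof (induction m)
  case (Suc m)
  define n where "n = real (Suc m)"
  have n_pos: "n > 0" by (simp add: n_def)
  have "(n + 1) ^ Suc m = n ^ Suc m * (1 + 1 / n) ^ Suc m"
    using n_pos by (simp add: field_simps flip: power_mult_distrib)
  also have "\<dots> \<le> n ^ Suc m * exp 1"
    using one_plus_divide_power_le_exp[of 1 "Suc m"] by (intro mult_left_mono) (simp_all add: n_def)
  finally have "(n + 1) ^ Suc (Suc m) \<le> (n + 1) * (n ^ Suc m * exp 1)"
    using n_pos by (simp add: mult_left_mono)
  also have "\<dots> \<le> (n + 1) * (fact (Suc m) * exp (real m) * exp 1)"
    using Suc.IH n_pos by (intro mult_left_mono mult_right_mono) (simp_all add: n_def)
  also have "\<dots> = fact (Suc (Suc m)) * exp (real (Suc m))"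
    by (simp add: n_def exp_add[symmetric] algebra_simps)
  finally show ?case by (simp add: n_def)
qed simp

lemma sum_diff_mult_power_div_fact:
  fixes x :: real
  shows "(\<Sum>k<Suc m. (x - real k) * x ^ k / fact k) = x ^ Suc m / fact m"
proof (induction m)
  case (Suc m)
  then show ?case by (simp add: field_simps del: of_nat_Suc)
qed simp

lemma integrable_poisson_pmf_real:
  assumes "0 < x"
  shows "integrable (measure_pmf (poisson_pmf x)) real"
proof -
  let ?f = "\<lambda>k. x ^ k / fact k * exp (- x) * real k"
  have "summable (\<lambda>k. x * exp (-x) * (inverse (fact k) * x ^ k))"
    by (intro summable_mult summable_exp)
  then have "summable (\<lambda>k. ?f (Suc k))"
    by (simp add: field_simps del: of_nat_Suc)
  then have "summable ?f"
    by (rule summable_Suc_iff[THEN iffD1])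
  then show ?thesis
    using assms
    by (simp add: measure_pmf_eq_density integrable_density integrable_count_space_nat_iff abs_mult)
qed

lemma expectation_poisson_min:
  assumes "0 < n"
  shows "measure_pmf.expectation (poisson_pmf (real n)) (\<lambda>k. min (real k) (real n))
           = real n * (1 - real n ^ n / fact n * exp (- real n))"
proof -
  obtain m where n: "n = Suc m" using assms gr0_implies_Suc by blast
  let ?M = "measure_pmf (poisson_pmf (real n))"
  have bounded_integrable: "integrable ?M f" if "\<And>k. \<bar>f k\<bar> \<le> real n" for f :: "nat \<Rightarrow> real"
    using that by (intro measure_pmf.integrable_const_bound[where B = "real n"]) auto
  have "(LINT k|?M. real n - min (real k) (real n))
          = (\<Sum>k<n. (real n - min (real k) (real n)) * pmf (poisson_pmf (real n)) k)"
    by (rule integral_measure_pmf_real) auto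
  also have "\<dots> = exp (- real n) * (\<Sum>k<Suc m. (real n - real k) * real n ^ k / fact k)"
    unfolding sum_distrib_left n by (intro sum.cong) auto
  also have "\<dots> = exp (- real n) * (real n ^ Suc m / fact m)"
    by (simp only: sum_diff_mult_power_div_fact)
  also have "\<dots> = real n * (real n ^ n / fact n * exp (- real n))"
    using n by (simp add: field_simps del: of_nat_Suc)
  finally have shortfall: "(LINT k|?M. real n - min (real k) (real n)) = \<dots>" .
  have "(LINT k|?M. min (real k) (real n)) = (LINT k|?M. real n) - (LINT k|?M. real n - min (real k) (real n))"
    by (subst Bochner_Integration.integral_diff) (auto intro!: bounded_integrable)
  also have "\<dots> = real n * (1 - real n ^ n / fact n * exp (- real n))"
    by (simp add: shortfall algebra_simps)
  finally show ?thesis .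
qed

lemma expectation_poisson_min_ge:
  assumes "0 < n"
  shows "(1 - 1 / exp 1) * real n \<le> measure_pmf.expectation (poisson_pmf (real n)) (\<lambda>k. min (real k) (real n))"
proof -
  obtain m where n: "n = Suc m" using assms gr0_implies_Suc by blast
  have "real n ^ n / fact n * exp (- real n) \<le> exp (real m) * exp (- real n)"
    using power_self_le_fact_mult_exp[of m] n by (simp add: divide_le_eq mult.commute)
  also have "\<dots> = 1 / exp 1"
    using n by (simp add: exp_minus field_simps flip: exp_add)
  finally show ?thesis
    using assms by (simp add: expectation_poisson_min mult_left_mono mult.commute)
qed

lemma expectation_poisson_concave_ge:
  fixes \<phi> :: "nat \<Rightarrow> real"
  assumes conc: "concave_nat \<phi>" and mono: "mono \<phi>" and zero: "\<phi> 0 = 0" and "0 < n"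
  shows "(1 - 1 / exp 1) * \<phi> n \<le> measure_pmf.expectation (poisson_pmf (real n)) \<phi>"
proof -
  let ?M = "measure_pmf (poisson_pmf (real n))"
  have nonneg: "0 \<le> \<phi> k" for k
    using mono zero by (metis le0 monoD)
  have "integrable ?M \<phi>"
  proof (rule Bochner_Integration.integrable_bound)
    show "integrable ?M (\<lambda>k. \<phi> 1 * real k)"
      using integrable_poisson_pmf_real \<open>0 < n\<close> by simp
    show "AE k in ?M. norm (\<phi> k) \<le> norm (\<phi> 1 * real k)"
      using concave_nat_le_linear[OF conc zero] nonneg by (simp add: abs_of_nonneg)
  qed simp
  moreover have "integrable ?M (\<lambda>k. \<phi> n * min (real k) (real n))"
    using nonneg[of n]
    by (intro measure_pmf.integrable_const_bound[where B = "\<phi> n * real n"]) (auto intro!: always_eventually mult_left_mono)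
  ultimately have "(LINT k|?M. \<phi> n * min (real k) (real n)) \<le> (LINT k|?M. real n * \<phi> k)"
    by (intro integral_mono concave_nat_min_le[OF conc mono zero]) simp_all
  then have "\<phi> n * measure_pmf.expectation (poisson_pmf (real n)) (\<lambda>k. min (real k) (real n))
      \<le> real n * measure_pmf.expectation (poisson_pmf (real n)) \<phi>"
    by simp
  moreover have "real n * ((1 - 1 / exp 1) * \<phi> n)
      \<le> \<phi> n * measure_pmf.expectation (poisson_pmf (real n)) (\<lambda>k. min (real k) (real n))"
    using mult_left_mono[OF expectation_poisson_min_ge[OF \<open>0 < n\<close>] nonneg[of n]]
    by (simp only: mult_ac)
  ultimately have "real n * ((1 - 1 / exp 1) * \<phi> n) \<le> real n * measure_pmf.expectation (poisson_pmf (real n)) \<phi>"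
    by (rule order.trans[rotated])
  then show ?thesis
    by (rule mult_left_le_imp_le) (simp add: \<open>0 < n\<close>)
qed

theorem mainTheorem2:
  fixes \<phi> :: "nat \<Rightarrow> real"
  assumes "concave_nat \<phi>"
    and "mono \<phi>"
    and "\<phi> 0 = 0"
    and "\<forall>x\<ge>1. \<phi> x > 0"
  shows "poisson_concavity_ratio \<phi> \<ge> 1 - 1 / exp 1"
  unfolding poisson_concavity_ratio_def
proof (rule cINF_greatest)
  fix n :: nat
  assume "n \<in> {1..}"
  then have "0 < n" and "0 < \<phi> n" using assms(4) by auto
  with expectation_poisson_concave_ge[OF assms(1-3)] show "1 - 1 / exp 1 \<le> poisson_ratio \<phi> n"
    by (simp add: poisson_ratio_def le_divide_eq)
qed simp

end
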